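(* Let $\psi\in C^1((0,\infty))$, $d>0$, and let $G=(V,E)$ be a finite graph satisfying $CD\psi(d,0)$. Let $u$ be a positive solution to the heat equation on $G$. Then for all $x\in V$ and $t>0$, \[ -\Delta^\psi u(x,t)\le\frac{d}{2t}. \]
   Context: A finite graph $G=(V,E)$: finite set $V$, irreflexive symmetric relation $E$; $v\sim w$ iff $(v,w)\in E$. $C^+(V)$: positive functions on $V$. Laplacian $\Delta f(v)=\sum_{w\sim v}(f(w)-f(v))$. For $f\in C^+(V)$: $(\Delta^\psi f)(v):=\Delta\big[\psi\big(\tfrac{f}{f(v)}\big)\big](v)$; $(\Omega^\psi f)(v):=\Delta\Big[\psi'\big(\tfrac{f}{f(v)}\big)\cdot\tfrac{f}{f(v)}\cdot\big(\tfrac{\Delta f}{f}-\tfrac{(\Delta f)(v)}{f(v)}\big)\Big](v)$; $2\Gamma_2^\psi(f):=\Omega^\psi f+\frac{\Delta f\,\Delta^\psi f}{f}-\frac{\Delta(f\,\Delta^\psi f)}{f}$. $G$ satisfies $CD\psi(d,0)$ if $\Gamma_2^\psi(f)\ge\frac1d(\Delta^\psi f)^2$ for all $f\in C^+(V)$. A solution to the heat equation on $G$ is $u:V\times[0,\infty)\to\mathbb{R}$, continuously differentiable in $t$, with $\Delta u-\partial_t u=0$; $\Delta^\psi u(x,t)$ means $(\Delta^\psi u(\cdot,t))(x)$. *)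

theory Defs
  imports "HOL-Analysis.Analysis"
begin

definition finite_graph :: "'a set \<Rightarrow> ('a \<Rightarrow> 'a \<Rightarrow> bool) \<Rightarrow> bool" where
  "finite_graph V E \<longleftrightarrow> finite V \<and> (\<forall>v w. E v w \<longrightarrow> v \<in> V \<and> w \<in> V)
     \<and> (\<forall>v. \<not> E v v) \<and> (\<forall>v w. E v w \<longrightarrow> E w v)"

definition lap :: "'a set \<Rightarrow> ('a \<Rightarrow> 'a \<Rightarrow> bool) \<Rightarrow> ('a \<Rightarrow> real) \<Rightarrow> 'a \<Rightarrow> real" where
  "lap V E f v = (\<Sum>w\<in>{w\<in>V. E v w}. f w - f v)"

definition lap_psi :: "'a set \<Rightarrow> ('a \<Rightarrow> 'a \<Rightarrow> bool) \<Rightarrow> (real \<Rightarrow> real) \<Rightarrow> ('a \<Rightarrow> real) \<Rightarrow> 'a \<Rightarrow> real" where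
  "lap_psi V E \<psi> f v = lap V E (\<lambda>w. \<psi> (f w / f v)) v"

definition Omega_psi :: "'a set \<Rightarrow> ('a \<Rightarrow> 'a \<Rightarrow> bool) \<Rightarrow> (real \<Rightarrow> real) \<Rightarrow> ('a \<Rightarrow> real) \<Rightarrow> 'a \<Rightarrow> real" where
  "Omega_psi V E \<psi> f v = lap V E (\<lambda>w. deriv \<psi> (f w / f v) * (f w / f v)
       * (lap V E f w / f w - lap V E f v / f v)) v"

text \<open>\<open>Gamma2_psi\<close> is \<open>\<Gamma>\<^sub>2\<^sup>\<psi>\<close>, i.e. half of the defining expression for \<open>2\<Gamma>\<^sub>2\<^sup>\<psi>\<close>.\<close>
definition Gamma2_psi :: "'a set \<Rightarrow> ('a \<Rightarrow> 'a \<Rightarrow> bool) \<Rightarrow> (real \<Rightarrow> real) \<Rightarrow> ('a \<Rightarrow> real) \<Rightarrow> 'a \<Rightarrow> real" where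
  "Gamma2_psi V E \<psi> f v = (Omega_psi V E \<psi> f v
       + lap V E f v * lap_psi V E \<psi> f v / f v
       - lap V E (\<lambda>w. f w * lap_psi V E \<psi> f w) v / f v) / 2"

definition CD_psi :: "'a set \<Rightarrow> ('a \<Rightarrow> 'a \<Rightarrow> bool) \<Rightarrow> (real \<Rightarrow> real) \<Rightarrow> real \<Rightarrow> bool" where
  "CD_psi V E \<psi> d \<longleftrightarrow> (\<forall>f. (\<forall>v\<in>V. f v > 0) \<longrightarrow>
      (\<forall>v\<in>V. Gamma2_psi V E \<psi> f v \<ge> (lap_psi V E \<psi> f v)\<^sup>2 / d))"

definition heat_solution :: "'a set \<Rightarrow> ('a \<Rightarrow> 'a \<Rightarrow> bool) \<Rightarrow> ('a \<Rightarrow> real \<Rightarrow> real) \<Rightarrow> bool" where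
  "heat_solution V E u \<longleftrightarrow> (\<exists>u'. \<forall>x\<in>V.
      continuous_on {0..} (u' x) \<and>
      (\<forall>t\<ge>0. (u x has_real_derivative u' x t) (at t within {0..})
              \<and> lap V E (\<lambda>y. u y t) x - u' x t = 0))"

end

theory Submission
  imports Defs
begin

text \<open>Li--Yau maximum principle. Put \<open>H(x,t) = -t \<Delta>\<^sup>\<psi>u(x,t)\<close> and let \<open>(x\<^sub>0,t\<^sub>0)\<close> maximise
  \<open>H\<close> over \<open>V \<times> [0,T]\<close>. If \<open>H(x\<^sub>0,t\<^sub>0) > 0\<close> then \<open>t\<^sub>0 > 0\<close>, so \<open>\<partial>\<^sub>tH \<ge> 0\<close> there and
  \<open>\<Delta>\<^sup>\<psi>u(\<cdot>,t\<^sub>0)\<close> is minimal at \<open>x\<^sub>0\<close> among its neighbours. Since \<open>\<partial>\<^sub>t\<Delta>\<^sup>\<psi>u = \<Omega>\<^sup>\<psi>u\<close>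
  and \<open>\<Omega>\<^sup>\<psi> = 2\<Gamma>\<^sub>2\<^sup>\<psi>\<close> plus a term that is nonnegative at such a minimum, the curvature
  condition yields \<open>0 \<le> \<partial>\<^sub>tH \<le> (H - 2H\<^sup>2/d)/t\<^sub>0\<close>, whence \<open>H \<le> d/2\<close>.\<close>

lemma has_real_derivative_nonneg_at_left_max:
  fixes f :: "real \<Rightarrow> real"
  assumes "(f has_real_derivative D) (at t within {a..})" and "a < t"
    and "\<forall>s\<in>{a..t}. f s \<le> f t"
  shows "D \<ge> 0"
proof (rule ccontr)
  assume "\<not> D \<ge> 0"
  then obtain \<delta> where "\<delta> > 0" and dec: "\<forall>h>0. t - h \<in> {a..} \<longrightarrow> h < \<delta> \<longrightarrow> f t < f (t - h)"
    using has_real_derivative_neg_dec_left[OF assms(1)] by auto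
  define h where "h = min (t - a) (\<delta> / 2)"
  have "f t < f (t - h)" using dec \<open>\<delta> > 0\<close> assms(2) unfolding h_def by auto
  moreover have "f (t - h) \<le> f t" using assms(2,3) \<open>\<delta> > 0\<close> unfolding h_def by auto
  ultimately show False by simp
qed

lemma finite_family_attains_max:
  fixes H :: "'a \<Rightarrow> 'b::topological_space \<Rightarrow> real"
  assumes "finite V" and "V \<noteq> {}" and "compact K" and "K \<noteq> {}"
    and "\<forall>y\<in>V. continuous_on K (H y)"
  obtains x0 t0 where "x0 \<in> V" "t0 \<in> K" "\<forall>y\<in>V. \<forall>r\<in>K. H y r \<le> H x0 t0"
proof -
  have "\<forall>y\<in>V. \<exists>s\<in>K. \<forall>r\<in>K. H y r \<le> H y s"
    using continuous_attains_sup[OF assms(3,4)] assms(5) by blast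
  then obtain tm where tm: "\<forall>y\<in>V. tm y \<in> K \<and> (\<forall>r\<in>K. H y r \<le> H y (tm y))"
    by metis
  define m where "m = Max ((\<lambda>y. H y (tm y)) ` V)"
  have "m \<in> (\<lambda>y. H y (tm y)) ` V"
    unfolding m_def using assms(1,2) by (intro Max_in) auto
  then obtain x0 where "x0 \<in> V" and "m = H x0 (tm x0)"
    by auto
  moreover have "H y r \<le> m" if "y \<in> V" "r \<in> K" for y r
    using tm that Max_ge[of "(\<lambda>y. H y (tm y)) ` V"] assms(1) unfolding m_def
    by (meson finite_imageI image_eqI order_trans)
  ultimately show thesis
    using that tm by metis
qed

lemma riccati_bound:
  fixes d t p q :: real
  assumes "d > 0" and "t > 0" and "2 * p\<^sup>2 / d \<le> q" and "0 \<le> - p - t * q"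
  shows "- t * p \<le> d / 2"
proof (rule ccontr)
  define h where "h = - t * p"
  assume "\<not> h \<le> d / 2"
  then have "h * (d - 2 * h) / d < 0"
    using assms(1) by (intro divide_neg_pos mult_pos_neg) auto
  moreover have "0 \<le> t * (- p - t * q)"
    using assms(2,4) by simp
  also have "\<dots> \<le> t * (- p - t * (2 * p\<^sup>2 / d))"
    using assms(2,3) by (intro mult_left_mono diff_left_mono) auto
  also have "\<dots> = h * (d - 2 * h) / d"
    unfolding h_def using assms(1) by (simp add: power2_eq_square field_simps)
  ultimately show False by simp
qed

lemma heat_solution_has_real_derivative:
  assumes "heat_solution V E u" and "x \<in> V" and "t \<ge> 0"
  shows "(u x has_real_derivative lap V E (\<lambda>y. u y t) x) (at t within {0..})"
proof -
  from assms(1) obtain u' where u': "\<forall>x\<in>V. \<forall>t\<ge>0. (u x has_real_derivative u' x t) (at t within {0..})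
      \<and> lap V E (\<lambda>y. u y t) x - u' x t = 0"
    unfolding heat_solution_def by blast
  with assms(2,3) show ?thesis
    by (metis eq_iff_diff_eq_0)
qed

lemma has_real_derivative_psi_ratio:
  fixes f g :: "real \<Rightarrow> real"
  assumes "\<forall>s>0. \<psi> differentiable (at s)"
    and "(f has_real_derivative f') (at t within S)" and "(g has_real_derivative g') (at t within S)"
    and "f t > 0" and "g t > 0"
  shows "((\<lambda>t. \<psi> (f t / g t)) has_real_derivative
      deriv \<psi> (f t / g t) * (f t / g t) * (f' / f t - g' / g t)) (at t within S)"
proof -
  have ratio: "((\<lambda>t. f t / g t) has_real_derivative (f' * g t - f t * g') / (g t * g t)) (at t within S)"
    using assms(2,3,5) by (intro DERIV_divide) auto
  have "(\<psi> has_real_derivative deriv \<psi> (f t / g t)) (at (f t / g t))"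
    using assms(1,4,5) by (simp add: DERIV_deriv_iff_real_differentiable)
  from DERIV_chain2[OF this ratio] show ?thesis
    by (rule DERIV_cong) (use assms(4,5) in \<open>simp add: field_simps\<close>)
qed

lemma lap_psi_heat_has_real_derivative:
  assumes "\<forall>s>0. \<psi> differentiable (at s)"
    and "heat_solution V E u" and "\<forall>y\<in>V. \<forall>t\<ge>0. u y t > 0"
    and "x \<in> V" and "t \<ge> 0"
  shows "((\<lambda>t. lap_psi V E \<psi> (\<lambda>y. u y t) x) has_real_derivative
      Omega_psi V E \<psi> (\<lambda>y. u y t) x) (at t within {0..})"
proof -
  have "((\<lambda>t. \<psi> (u w t / u x t)) has_real_derivative
      deriv \<psi> (u w t / u x t) * (u w t / u x t) *
        (lap V E (\<lambda>y. u y t) w / u w t - lap V E (\<lambda>y. u y t) x / u x t)) (at t within {0..})"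
    if "w \<in> V" for w
    using assms that
    by (intro has_real_derivative_psi_ratio heat_solution_has_real_derivative) auto
  note ratio_terms = this[unfolded lap_def]
  show ?thesis
    unfolding lap_psi_def Omega_psi_def lap_def
    by (intro DERIV_sum DERIV_diff ratio_terms) (use assms(4) in auto)
qed

lemma lap_psi_heat_continuous_on:
  assumes "\<forall>s>0. \<psi> differentiable (at s)"
    and "heat_solution V E u" and "\<forall>y\<in>V. \<forall>t\<ge>0. u y t > 0" and "x \<in> V"
  shows "continuous_on {0..} (\<lambda>t. lap_psi V E \<psi> (\<lambda>y. u y t) x)"
  by (rule DERIV_continuous_on[OF lap_psi_heat_has_real_derivative[OF assms(1-4)]]) simp

lemma Omega_psi_eq_Gamma2_psi:
  assumes "f x \<noteq> 0"
  shows "Omega_psi V E \<psi> f x = 2 * Gamma2_psi V E \<psi> f x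
     + (\<Sum>w\<in>{w\<in>V. E x w}. f w * (lap_psi V E \<psi> f w - lap_psi V E \<psi> f x)) / f x"
proof -
  define p where "p = lap_psi V E \<psi> f"
  have "lap V E (\<lambda>w. f w * p w) x
      = (\<Sum>w\<in>{w\<in>V. E x w}. p x * (f w - f x) + f w * (p w - p x))"
    unfolding lap_def by (intro sum.cong) (auto simp: algebra_simps)
  also have "\<dots> = lap V E f x * p x + (\<Sum>w\<in>{w\<in>V. E x w}. f w * (p w - p x))"
    unfolding lap_def by (simp add: sum.distrib sum_distrib_left mult.commute)
  finally have product_rule: "lap V E (\<lambda>w. f w * p w) x
      = lap V E f x * p x + (\<Sum>w\<in>{w\<in>V. E x w}. f w * (p w - p x))" .
  show ?thesis
    unfolding Gamma2_psi_def p_def[symmetric] product_rule using assms by (simp add: field_simps)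
qed

lemma CD_psi_Omega_psi_ge_at_local_min:
  assumes "CD_psi V E \<psi> d" and "\<forall>v\<in>V. f v > 0" and "x \<in> V"
    and "\<forall>w\<in>V. E x w \<longrightarrow> lap_psi V E \<psi> f x \<le> lap_psi V E \<psi> f w"
  shows "2 * (lap_psi V E \<psi> f x)\<^sup>2 / d \<le> Omega_psi V E \<psi> f x"
proof -
  have "(lap_psi V E \<psi> f x)\<^sup>2 / d \<le> Gamma2_psi V E \<psi> f x"
    using assms(1-3) unfolding CD_psi_def by blast
  moreover have "0 \<le> (\<Sum>w\<in>{w\<in>V. E x w}. f w * (lap_psi V E \<psi> f w - lap_psi V E \<psi> f x)) / f x"
    using assms(2-4) by (intro divide_nonneg_pos sum_nonneg mult_nonneg_nonneg) auto
  ultimately show ?thesis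
    using Omega_psi_eq_Gamma2_psi[of f x] assms(2,3) by fastforce
qed

lemma lap_psi_heat_bound_at_max:
  assumes "\<forall>s>0. \<psi> differentiable (at s)" and "d > 0" and "CD_psi V E \<psi> d"
    and "heat_solution V E u" and "\<forall>y\<in>V. \<forall>t\<ge>0. u y t > 0"
    and "x0 \<in> V" and "t0 > 0"
    and max: "\<forall>y\<in>V. \<forall>r\<in>{0..t0}.
      - r * lap_psi V E \<psi> (\<lambda>z. u z r) y \<le> - t0 * lap_psi V E \<psi> (\<lambda>z. u z t0) x0"
  shows "- t0 * lap_psi V E \<psi> (\<lambda>z. u z t0) x0 \<le> d / 2"
proof -
  define f where "f = (\<lambda>z. u z t0)"
  define p where "p = lap_psi V E \<psi> f x0"
  define Om where "Om = Omega_psi V E \<psi> f x0"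
  have f_pos: "\<forall>v\<in>V. f v > 0"
    using assms(5,7) unfolding f_def by auto
  have "((\<lambda>t. - t * lap_psi V E \<psi> (\<lambda>z. u z t) x0) has_real_derivative (-1) * p + Om * (- t0))
      (at t0 within {0..})"
    unfolding p_def Om_def f_def using assms(1,4-7)
    by (intro DERIV_mult lap_psi_heat_has_real_derivative) (auto intro!: derivative_eq_intros)
  then have "0 \<le> (-1) * p + Om * (- t0)"
    by (rule has_real_derivative_nonneg_at_left_max[where a = 0]) (use max assms(6,7) in auto)
  then have "0 \<le> - p - t0 * Om"
    by (simp add: mult.commute)
  moreover have "2 * p\<^sup>2 / d \<le> Om"
  proof -
    have "p \<le> lap_psi V E \<psi> f w" if "w \<in> V" for w
    proof -
      have "- t0 * lap_psi V E \<psi> f w \<le> - t0 * p"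
        using max that assms(7) unfolding p_def f_def by auto
      then show ?thesis
        using assms(7) by simp
    qed
    then show ?thesis
      unfolding p_def Om_def using assms(3,6) f_pos by (intro CD_psi_Omega_psi_ge_at_local_min) auto
  qed
  ultimately show ?thesis
    unfolding p_def f_def using riccati_bound[OF assms(2,7)] by blast
qed

theorem mainTheorem7:
  fixes V :: "'a set" and E :: "'a \<Rightarrow> 'a \<Rightarrow> bool" and \<psi> :: "real \<Rightarrow> real"
    and d :: real and u :: "'a \<Rightarrow> real \<Rightarrow> real"
  assumes "\<forall>s>0. \<psi> differentiable (at s)"
    and "continuous_on {0<..} (deriv \<psi>)"
    and "d > 0"
    and "finite_graph V E"
    and "CD_psi V E \<psi> d"
    and "heat_solution V E u"
    and "\<forall>x\<in>V. \<forall>t\<ge>0. u x t > 0"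
  shows "\<forall>x\<in>V. \<forall>t>0. - lap_psi V E \<psi> (\<lambda>y. u y t) x \<le> d / (2 * t)"
proof (intro ballI allI impI)
  fix x T assume "x \<in> V" and "(T::real) > 0"
  define H where "H y t = - t * lap_psi V E \<psi> (\<lambda>z. u z t) y" for y t
  have "\<forall>y\<in>V. continuous_on {0..T} (H y)"
    unfolding H_def using assms(1,6,7)
    by (auto intro!: continuous_intros intro: continuous_on_subset[OF lap_psi_heat_continuous_on])
  then obtain x0 t0 where "x0 \<in> V" "t0 \<in> {0..T}" and max: "\<forall>y\<in>V. \<forall>r\<in>{0..T}. H y r \<le> H x0 t0"
    using finite_family_attains_max[of V "{0..T}" H] assms(4) \<open>x \<in> V\<close> \<open>T > 0\<close>
    unfolding finite_graph_def by auto
  have "H x0 t0 \<le> d / 2"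
  proof (cases "t0 = 0")
    case False
    with \<open>t0 \<in> {0..T}\<close> max \<open>x0 \<in> V\<close> show ?thesis
      unfolding H_def by (intro lap_psi_heat_bound_at_max[OF assms(1,3,5,6,7)]) auto
  qed (use assms(3) H_def in simp)
  then have "H x T \<le> d / 2"
    using max \<open>x \<in> V\<close> \<open>T > 0\<close> by (meson atLeastAtMost_iff less_imp_le order_refl order_trans)
  with \<open>T > 0\<close> show "- lap_psi V E \<psi> (\<lambda>y. u y T) x \<le> d / (2 * T)"
    unfolding H_def by (simp add: field_simps)
qed

end
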